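(* Let $\psi$ be an injective map from the positive integers to the positive integers and let $A=\{\psi(n): n\ge 1\}$. For every nonnegative integer $n$, \[ p^{A}(n)=\sum_{(N_0,N_1,N_2,\dots)}\ \prod_{j\ge 0} p^{A}_{1}(N_j), \] where the sum runs over all sequences $(N_0,N_1,N_2,\dots)$ of nonnegative integers (necessarily with only finitely many nonzero terms) satisfying $n=\sum_{i\ge 0}2^{i}N_i$.
   Context: For a set $A$ of positive integers and a positive integer $\alpha$, $p^{A}_{\alpha}(n)$ denotes the number of partitions of $n$ into parts from $A$ in which each part occurs at most $\alpha$ times, and $p^{A}(n)$ denotes the number of partitions of $n$ into parts from $A$ with no restriction on multiplicities. By convention $p^{A}_{\alpha}(0)=p^{A}(0)=1$, so the product on the right is effectively finite. (In the paper the sum is indexed by the rows of the "solution matrix" listing all nonnegative integer solutions of $n=\sum_{i\ge0}2^iN_i$.) *)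

theory Defs
  imports Main "HOL-Library.Multiset"
begin

definition part_count :: "nat set \<Rightarrow> nat \<Rightarrow> nat" where
  "part_count A n = card {M :: nat multiset. set_mset M \<subseteq> A \<and> sum_mset M = n}"

definition part_count_bounded :: "nat set \<Rightarrow> nat \<Rightarrow> nat \<Rightarrow> nat" where
  "part_count_bounded A \<alpha> n =
     card {M :: nat multiset. set_mset M \<subseteq> A \<and> sum_mset M = n \<and> (\<forall>x. count M x \<le> \<alpha>)}"

end

theory Submission
  imports Defs
begin

text \<open>Every partition M splits uniquely as M = S + 2 H, where S consists of the parts of odd
  multiplicity (a partition into distinct parts) and H halves the remaining multiplicities.
  Hence the partition numbers p(n) are determined by p(0) = 1 and, for n > 0,
  p(n) = \<Sum>{q(k) p((n - k)/2) | k \<le> n, k \<equiv> n mod 2}, where q(k) counts the partitions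
  of k into distinct parts. Splitting off the first entry N(0) = k of a binary composition
  n = \<Sum> 2^i N(i) shows that the right-hand side obeys the same recursion.\<close>

definition partitions :: "nat set \<Rightarrow> nat \<Rightarrow> nat multiset set" where
  "partitions A n = {M. set_mset M \<subseteq> A \<and> sum_mset M = n}"

definition distinct_partitions :: "nat set \<Rightarrow> nat \<Rightarrow> nat multiset set" where
  "distinct_partitions A n = {M. set_mset M \<subseteq> A \<and> sum_mset M = n \<and> (\<forall>x. count M x \<le> 1)}"

lemma size_le_sum_mset:
  assumes "0 \<notin># M"
  shows "size M \<le> sum_mset (M :: nat multiset)"
proof -
  have "size M = (\<Sum>x\<in>#M. 1)" by (rule size_eq_sum_mset)
  also have "\<dots> \<le> (\<Sum>x\<in>#M. x)"
    by (rule sum_mset_mono) (use assms in \<open>auto simp: Suc_le_eq intro!: gr0I\<close>)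
  finally show ?thesis by simp
qed

lemma finite_partitions:
  assumes "0 \<notin> A"
  shows "finite (partitions A n)"
proof (rule finite_subset)
  show "partitions A n \<subseteq> (\<Union>k\<le>n. multisets_of_size {..n} k)"
  proof
    fix M assume M: "M \<in> partitions A n"
    then have "0 \<notin># M" using assms by (auto simp: partitions_def)
    then have "size M \<le> n" using M size_le_sum_mset by (auto simp: partitions_def)
    moreover have "set_mset M \<subseteq> {..n}"
      using M by (auto simp: partitions_def dest!: multi_member_split)
    ultimately show "M \<in> (\<Union>k\<le>n. multisets_of_size {..n} k)"
      by (auto simp: multisets_of_size_def)
  qed
qed auto

lemma finite_distinct_partitions:
  "0 \<notin> A \<Longrightarrow> finite (distinct_partitions A n)"
  by (rule finite_subset[OF _ finite_partitions[of A n]])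
    (auto simp: distinct_partitions_def partitions_def)

lemma count_Abs_multiset_comp:
  assumes "f 0 = 0"
  shows "count (Abs_multiset (\<lambda>a. f (count M a))) = (\<lambda>a. f (count M a))"
proof -
  have "{a. 0 < f (count M a)} \<subseteq> set_mset M"
    using assms by (metis (mono_tags) count_inI less_irrefl mem_Collect_eq subsetI)
  then show ?thesis by (intro count_Abs_multiset) (auto dest: finite_subset)
qed

definition mset_half :: "'a multiset \<Rightarrow> 'a multiset" where
  "mset_half M = Abs_multiset (\<lambda>a. count M a div 2)"

definition mset_odd_part :: "'a multiset \<Rightarrow> 'a multiset" where
  "mset_odd_part M = Abs_multiset (\<lambda>a. count M a mod 2)"

lemma count_mset_half [simp]: "count (mset_half M) a = count M a div 2"
  unfolding mset_half_def by (subst count_Abs_multiset_comp) auto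

lemma count_mset_odd_part [simp]: "count (mset_odd_part M) a = count M a mod 2"
  unfolding mset_odd_part_def by (subst count_Abs_multiset_comp) auto

lemma mset_odd_part_plus_half: "mset_odd_part M + mset_half M + mset_half M = M"
  by (rule multiset_eqI) (simp, presburger)

lemma set_mset_half_subset: "set_mset (mset_half M) \<subseteq> set_mset M"
  by (auto simp flip: count_greater_zero_iff intro: gr0I)

lemma set_mset_odd_part_subset: "set_mset (mset_odd_part M) \<subseteq> set_mset M"
  by (auto simp flip: count_greater_zero_iff intro: gr0I)

lemma mset_odd_part_split:
  assumes "\<forall>x. count S x \<le> 1"
  shows "mset_odd_part (S + M + M) = S" and "mset_half (S + M + M) = M"
proof -
  have "(s + m + m) mod 2 = s \<and> (s + m + m) div 2 = m" if "s \<le> 1" for s m :: nat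
    using that by presburger
  with assms show "mset_odd_part (S + M + M) = S" "mset_half (S + M + M) = M"
    by (auto intro!: multiset_eqI)
qed

lemma finite_parity_splits: "finite {k. k \<le> n \<and> even (n - k :: nat)}"
  by (rule finite_subset[of _ "{..n}"]) auto

lemma partitions_split_bij:
  "bij_betw (\<lambda>(k, S, M). S + M + M)
     (SIGMA k:{k. k \<le> n \<and> even (n - k)}. distinct_partitions A k \<times> partitions A ((n - k) div 2))
     (partitions A n)" (is "bij_betw ?join ?S _")
proof (rule bij_betw_byWitness[where f' = "\<lambda>M. (sum_mset (mset_odd_part M), mset_odd_part M, mset_half M)"])
  show "\<forall>x\<in>?S. (\<lambda>M. (sum_mset (mset_odd_part M), mset_odd_part M, mset_half M)) (?join x) = x"
    by (auto simp: distinct_partitions_def mset_odd_part_split)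
  show "\<forall>M\<in>partitions A n. ?join (sum_mset (mset_odd_part M), mset_odd_part M, mset_half M) = M"
    by (simp add: mset_odd_part_plus_half)
  show "?join ` ?S \<subseteq> partitions A n"
    by (auto simp: distinct_partitions_def partitions_def; presburger)
  show "(\<lambda>M. (sum_mset (mset_odd_part M), mset_odd_part M, mset_half M)) ` partitions A n \<subseteq> ?S"
  proof (rule image_subsetI)
    fix M assume M: "M \<in> partitions A n"
    let ?k = "sum_mset (mset_odd_part M)"
    have "?k + 2 * sum_mset (mset_half M) = n"
      using M arg_cong[OF mset_odd_part_plus_half[of M], of sum_mset] by (simp add: partitions_def)
    then have "?k \<le> n" "even (n - ?k)" "(n - ?k) div 2 = sum_mset (mset_half M)"
      by presburger+
    then show "(?k, mset_odd_part M, mset_half M) \<in> ?S"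
      using M set_mset_odd_part_subset[of M] set_mset_half_subset[of M]
      by (auto simp: distinct_partitions_def partitions_def)
  qed
qed

lemma card_partitions_recursion:
  assumes "0 \<notin> A"
  shows "card (partitions A n) =
    (\<Sum>k | k \<le> n \<and> even (n - k). card (distinct_partitions A k) * card (partitions A ((n - k) div 2)))"
proof -
  have "card (partitions A n) =
      card (SIGMA k:{k. k \<le> n \<and> even (n - k)}. distinct_partitions A k \<times> partitions A ((n - k) div 2))"
    by (rule bij_betw_same_card[OF partitions_split_bij, symmetric])
  also have "\<dots> = (\<Sum>k | k \<le> n \<and> even (n - k). card (distinct_partitions A k \<times> partitions A ((n - k) div 2)))"
    by (rule card_SigmaI) (auto simp: finite_parity_splits finite_partitions finite_distinct_partitions assms)
  finally show ?thesis by (simp add: card_cartesian_product)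
qed

lemma partitions_zero: "0 \<notin> A \<Longrightarrow> partitions A 0 = {{#}}"
  by (auto simp: partitions_def) (metis all_not_in_conv set_mset_eq_empty_iff subsetD)

lemma distinct_partitions_zero: "0 \<notin> A \<Longrightarrow> distinct_partitions A 0 = {{#}}"
  using partitions_zero by (auto simp: partitions_def distinct_partitions_def)

definition binary_weight :: "(nat \<Rightarrow> nat) \<Rightarrow> nat" where
  "binary_weight N = (\<Sum>i | N i \<noteq> 0. 2 ^ i * N i)"

definition binary_compositions :: "nat \<Rightarrow> (nat \<Rightarrow> nat) set" where
  "binary_compositions n = {N. finite {i. N i \<noteq> 0} \<and> n = binary_weight N}"

lemma support_case_nat:
  "{i. case_nat k N i \<noteq> 0} = {i. i = 0 \<and> k \<noteq> 0} \<union> Suc ` {i. N i \<noteq> 0}"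
proof (rule set_eqI)
  fix i show "i \<in> {i. case_nat k N i \<noteq> 0} \<longleftrightarrow> i \<in> {i. i = 0 \<and> k \<noteq> 0} \<union> Suc ` {i. N i \<noteq> 0}"
    by (cases i) auto
qed

lemma finite_support_case_nat_iff:
  "finite {i. case_nat k N i \<noteq> 0} \<longleftrightarrow> finite {i. N i \<noteq> 0}"
  by (simp add: support_case_nat finite_image_iff)

lemma sum_support_case_nat:
  fixes g :: "nat \<Rightarrow> nat \<Rightarrow> 'a::comm_monoid_add"
  assumes "finite {i. N i \<noteq> 0}" and "\<And>i. g i 0 = 0"
  shows "(\<Sum>i | case_nat k N i \<noteq> 0. g i (case_nat k N i)) = g 0 k + (\<Sum>i | N i \<noteq> 0. g (Suc i) (N i))"
proof -
  have "(\<Sum>i\<in>{i. i = 0 \<and> k \<noteq> 0}. g i (case_nat k N i)) = g 0 k"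
    using assms(2) by (cases "k = 0") auto
  moreover have "(\<Sum>i\<in>Suc ` {i. N i \<noteq> 0}. g i (case_nat k N i)) = (\<Sum>i | N i \<noteq> 0. g (Suc i) (N i))"
    by (simp add: sum.reindex)
  ultimately show ?thesis
    unfolding support_case_nat using assms(1) by (subst sum.union_disjoint) auto
qed

lemma binary_weight_case_nat:
  "finite {i. N i \<noteq> 0} \<Longrightarrow> binary_weight (case_nat k N) = k + 2 * binary_weight N"
  unfolding binary_weight_def
  by (subst sum_support_case_nat) (simp_all add: sum_distrib_left mult.assoc)

lemma prod_support_case_nat:
  fixes d :: "nat \<Rightarrow> 'a::comm_monoid_mult"
  assumes "finite {i. N i \<noteq> 0}" and "d 0 = 1"
  shows "(\<Prod>j | case_nat k N j \<noteq> 0. d (case_nat k N j)) = d k * (\<Prod>j | N j \<noteq> 0. d (N j))"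
proof -
  have "(\<Prod>j\<in>{i. i = 0 \<and> k \<noteq> 0}. d (case_nat k N j)) = d k"
    using assms(2) by (cases "k = 0") auto
  moreover have "(\<Prod>j\<in>Suc ` {i. N i \<noteq> 0}. d (case_nat k N j)) = (\<Prod>j | N j \<noteq> 0. d (N j))"
    by (simp add: prod.reindex)
  ultimately show ?thesis
    unfolding support_case_nat using assms(1) by (subst prod.union_disjoint) auto
qed

lemma binary_compositions_bound:
  assumes "N \<in> binary_compositions n"
  shows "2 ^ i * N i \<le> n"
  using assms unfolding binary_compositions_def binary_weight_def
  by (cases "N i = 0") (auto intro: member_le_sum)

lemma finite_binary_compositions: "finite (binary_compositions n)"
proof (rule finite_subset)
  show "binary_compositions n \<subseteq> {N. \<forall>i. (i \<in> {..n} \<longrightarrow> N i \<in> {..n}) \<and> (i \<notin> {..n} \<longrightarrow> N i = 0)}"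
  proof (intro subsetI CollectI allI conjI impI)
    fix N i assume N: "N \<in> binary_compositions n"
    have bound: "2 ^ i * N i \<le> n" by (rule binary_compositions_bound[OF N])
    have "N i \<le> 2 ^ i * N i" using mult_le_mono1[of 1 "2 ^ i" "N i"] by simp
    from order_trans[OF this bound] show "N i \<in> {..n}" by simp
    have "i < 2 ^ i * N i" if "N i \<noteq> 0"
    proof -
      have "2 ^ i \<le> 2 ^ i * N i" using that by simp
      with less_exp[of i] show ?thesis by (rule less_le_trans)
    qed
    then show "i \<notin> {..n} \<Longrightarrow> N i = 0" using bound by fastforce
  qed
qed (rule finite_set_of_finite_funs; simp)

lemma binary_compositions_split_bij:
  "bij_betw (\<lambda>(k, N). case_nat k N)
     (SIGMA k:{k. k \<le> n \<and> even (n - k)}. binary_compositions ((n - k) div 2))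
     (binary_compositions n)" (is "bij_betw ?join ?S _")
proof (rule bij_betw_byWitness[where f' = "\<lambda>N. (N 0, N \<circ> Suc)"])
  show "\<forall>x\<in>?S. (\<lambda>N. (N 0, N \<circ> Suc)) (?join x) = x"
    by (auto simp: comp_def)
  show "\<forall>N\<in>binary_compositions n. ?join (N 0, N \<circ> Suc) = N"
    by (auto simp: fun_eq_iff split: nat.splits)
  show "?join ` ?S \<subseteq> binary_compositions n"
  proof (rule image_subsetI)
    fix x assume "x \<in> ?S"
    then obtain k N where x: "x = (k, N)" and k: "k \<le> n" "even (n - k)"
      and fin: "finite {i. N i \<noteq> 0}" and N: "binary_weight N = (n - k) div 2"
      by (auto simp: binary_compositions_def)
    have "n = k + 2 * binary_weight N" using k N by presburger
    then show "?join x \<in> binary_compositions n"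
      using fin finite_support_case_nat_iff[of k N] binary_weight_case_nat[OF fin, of k]
      by (simp add: x binary_compositions_def)
  qed
  show "(\<lambda>N. (N 0, N \<circ> Suc)) ` binary_compositions n \<subseteq> ?S"
  proof (rule image_subsetI)
    fix N assume N: "N \<in> binary_compositions n"
    have N_eq: "case_nat (N 0) (N \<circ> Suc) = N"
      by (auto simp: fun_eq_iff split: nat.splits)
    have fin: "finite {i. (N \<circ> Suc) i \<noteq> 0}"
      using N finite_support_case_nat_iff[of "N 0" "N \<circ> Suc"] by (simp add: N_eq binary_compositions_def)
    have "n = binary_weight (case_nat (N 0) (N \<circ> Suc))"
      using N by (simp add: N_eq binary_compositions_def)
    also have "\<dots> = N 0 + 2 * binary_weight (N \<circ> Suc)"
      by (rule binary_weight_case_nat[OF fin])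
    finally have "n = N 0 + 2 * binary_weight (N \<circ> Suc)" .
    then show "(N 0, N \<circ> Suc) \<in> ?S"
      using fin by (auto simp: binary_compositions_def)
  qed
qed

lemma sum_binary_compositions_recursion:
  fixes d :: "nat \<Rightarrow> 'a::comm_semiring_1"
  assumes "d 0 = 1"
  shows "(\<Sum>N\<in>binary_compositions n. \<Prod>j | N j \<noteq> 0. d (N j)) =
    (\<Sum>k | k \<le> n \<and> even (n - k). d k * (\<Sum>N\<in>binary_compositions ((n - k) div 2). \<Prod>j | N j \<noteq> 0. d (N j)))"
proof -
  have "(\<Sum>N\<in>binary_compositions n. \<Prod>j | N j \<noteq> 0. d (N j)) =
      (\<Sum>(k, N)\<in>(SIGMA k:{k. k \<le> n \<and> even (n - k)}. binary_compositions ((n - k) div 2)).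
         \<Prod>j | case_nat k N j \<noteq> 0. d (case_nat k N j))"
    using sum.reindex_bij_betw[OF binary_compositions_split_bij, symmetric]
    by (simp add: case_prod_unfold)
  also have "\<dots> = (\<Sum>(k, N)\<in>(SIGMA k:{k. k \<le> n \<and> even (n - k)}. binary_compositions ((n - k) div 2)).
         d k * (\<Prod>j | N j \<noteq> 0. d (N j)))"
  proof (intro sum.cong refl, clarify)
    fix k N assume "N \<in> binary_compositions ((n - k) div 2)"
    then show "(\<Prod>j | case_nat k N j \<noteq> 0. d (case_nat k N j)) = d k * (\<Prod>j | N j \<noteq> 0. d (N j))"
      by (intro prod_support_case_nat assms) (simp add: binary_compositions_def)
  qed
  also have "\<dots> = (\<Sum>k | k \<le> n \<and> even (n - k). d k * (\<Sum>N\<in>binary_compositions ((n - k) div 2). \<Prod>j | N j \<noteq> 0. d (N j)))"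
    by (simp add: sum.Sigma[symmetric] finite_parity_splits finite_binary_compositions sum_distrib_left)
  finally show ?thesis .
qed

lemma binary_compositions_zero: "binary_compositions 0 = {\<lambda>_. 0}"
proof -
  have "N = (\<lambda>_. 0)" if "N \<in> binary_compositions 0" for N
    using binary_compositions_bound[OF that] by auto
  then show ?thesis by (auto simp: binary_compositions_def binary_weight_def)
qed

lemma halving_recursion_unique:
  fixes f g :: "nat \<Rightarrow> 'a::semiring_0"
  assumes "f 0 = g 0"
    and "\<And>n. 0 < n \<Longrightarrow> f n = (\<Sum>k | k \<le> n \<and> even (n - k). d k * f ((n - k) div 2))"
    and "\<And>n. 0 < n \<Longrightarrow> g n = (\<Sum>k | k \<le> n \<and> even (n - k). d k * g ((n - k) div 2))"
  shows "f n = g n"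
proof (induction n rule: less_induct)
  case (less n)
  show ?case
  proof (cases "n = 0")
    case False
    have "(n - k) div 2 < n" for k using False by simp
    with less False show ?thesis by (simp add: assms(2,3))
  qed (simp add: assms(1))
qed

theorem mainTheorem1:
  fixes \<psi> :: "nat \<Rightarrow> nat" and A :: "nat set" and n :: nat
  assumes "inj_on \<psi> {1..}"
    and "\<forall>k\<ge>1. \<psi> k \<ge> 1"
    and "A = \<psi> ` {1..}"
  shows "part_count A n =
    (\<Sum>N \<in> {N :: nat \<Rightarrow> nat. finite {i. N i \<noteq> 0} \<and>
                n = (\<Sum>i\<in>{i. N i \<noteq> 0}. 2 ^ i * N i)}.
        \<Prod>j\<in>{j. N j \<noteq> 0}. part_count_bounded A 1 (N j))"
proof -
  have A0: "0 \<notin> A" using assms(2,3) by fastforce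
  let ?d = "\<lambda>k. card (distinct_partitions A k)"
  have d0: "?d 0 = 1" by (simp add: distinct_partitions_zero[OF A0])
  have "card (partitions A n) = (\<Sum>N\<in>binary_compositions n. \<Prod>j | N j \<noteq> 0. ?d (N j))"
  proof (rule halving_recursion_unique[where d = ?d and f = "\<lambda>n. card (partitions A n)"
        and g = "\<lambda>n. \<Sum>N\<in>binary_compositions n. \<Prod>j | N j \<noteq> 0. ?d (N j)"])
    show "card (partitions A 0) = (\<Sum>N\<in>binary_compositions 0. \<Prod>j | N j \<noteq> 0. ?d (N j))"
      by (simp add: partitions_zero[OF A0] binary_compositions_zero)
  qed (rule card_partitions_recursion[OF A0], rule sum_binary_compositions_recursion[of ?d, OF d0])
  then show ?thesis
    by (simp add: part_count_def part_count_bounded_def partitions_def distinct_partitions_def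
        binary_compositions_def binary_weight_def)
qed

end
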